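(* Let $n\ge 2$, let $\alpha_1,\dots,\alpha_n\in\mathbb C$, and let $T\in\mathcal L(\mathcal P_n)$ be $T=I+\alpha_1D+\alpha_2D^2+\cdots+\alpha_nD^n$. Then $\alpha_1=0$ if and only if there exists a constant $\Gamma_T>0$ such that for every $f\in\mathcal P_n$ of degree at least $2$ with simple roots, $$\tau(f)\,R_T(f)<\Gamma_T .$$
   Context: $\mathcal P_n$ is the complex vector space of polynomials of degree at most $n$, $\mathcal L(\mathcal P_n)$ the linear operators on it, $D$ the differentiation operator and $I$ the identity. For a nonzero polynomial $f$, $Z(f)$ is its set of roots. For a nonconstant $f\in\mathcal P_n$, $R_T(f):=\max_{w\in Z(Tf)}\min_{x\in Z(f)}|w-x|$ (equivalently, the least $r\ge0$ with $Z(Tf)\subset Z(f)+\mathbb D(r)$, where $\mathbb D(r)=\{z:|z|\le r\}$ and $A+B=\{u+v:u\in A,v\in B\}$). For a polynomial $f$ of degree at least $2$ with at least two distinct roots, $\tau(f):=\min\{|w-v|: w\in Z(f),\ v\in Z(f')\setminus\{w\}\}$. "Simple roots" means all roots have multiplicity one. *)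

theory Defs
  imports "HOL-Computational_Algebra.Polynomial" Complex_Main
begin

definition zeros :: "complex poly \<Rightarrow> complex set" where
  "zeros p = {x. poly p x = 0}"

definition Top :: "nat \<Rightarrow> (nat \<Rightarrow> complex) \<Rightarrow> complex poly \<Rightarrow> complex poly" where
  "Top n \<alpha> f = f + (\<Sum>k = 1..n. smult (\<alpha> k) ((pderiv ^^ k) f))"

definition R_T :: "nat \<Rightarrow> (nat \<Rightarrow> complex) \<Rightarrow> complex poly \<Rightarrow> real" where
  "R_T n \<alpha> f = Max ((\<lambda>w. Min ((\<lambda>x. cmod (w - x)) ` zeros f)) ` zeros (Top n \<alpha> f))"

definition tau :: "complex poly \<Rightarrow> real" where
  "tau f = Min {cmod (w - v) | w v. w \<in> zeros f \<and> v \<in> zeros (pderiv f) \<and> v \<noteq> w}"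

end

theory Submission
  imports Defs "HOL-Computational_Algebra.Fundamental_Theorem_Algebra"
begin

(* The analytic tool is a derivative estimate: if every root of p lies at distance at least d
   from w, then |p^(k)(w)| d^k <= (deg p)^k |p(w)|  (proved by induction over the root
   multiset).  For the forward direction take a root w of Tf and its nearest root x0 of f at
   distance d = R_T(f), and write t = tau(f).  The estimate applied to f and Tf(w) = 0 bounds d
   by a constant; if some critical point is within t/2 of w then t < 2d; otherwise the
   estimate applied to f' (all critical points at distance >= t/2) together with alpha_1 = 0
   gives t |f(w)| <= B |f'(w)|, while d |f'(w)| <= n |f(w)|, so t d <= n B.
   For the converse we exhibit explicit quadratics f with roots alpha_1 + K/M and alpha_1 + M,
   where K = alpha_1^2 - 2 alpha_2, for which 0 is a root of Tf; then tau(f) R_T(f) grows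
   like M |alpha_1| / 8.
   The file develops iterated derivatives, the derivative estimate, and the basic properties
   of T, R_T and tau; the two directions are the lemmas tau_R_T_bounded and
   tau_R_T_unbounded, from which theorem3p1 follows. *)

section \<open>Iterated derivatives\<close>

lemma higher_pderiv_smult: "(pderiv^^k) (smult c p) = smult c ((pderiv^^k) p)"
  by (induction k) (auto simp: pderiv_smult)

lemma higher_pderiv_linear_factor:
  fixes q :: "'a::idom poly"
  shows "(pderiv^^(Suc j)) ([:-a,1:] * q) =
           [:-a,1:] * (pderiv^^(Suc j)) q + smult (of_nat (Suc j)) ((pderiv^^j) q)"
proof (induction j)
  case 0
  have "pderiv ([:-a,1:] * q) = [:-a,1:] * pderiv q + pderiv [:-a,1:] * q"
    by (metis pderiv_mult mult.commute)
  then show ?case by (simp add: pderiv_pCons)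
next
  case (Suc j)
  have "(pderiv^^(Suc (Suc j))) ([:-a,1:] * q) =
          pderiv ([:-a,1:] * (pderiv^^(Suc j)) q + smult (of_nat (Suc j)) ((pderiv^^j) q))"
    using Suc by simp
  also have "\<dots> = [:-a,1:] * (pderiv^^(Suc (Suc j))) q + smult (of_nat (Suc (Suc j))) ((pderiv^^(Suc j)) q)"
    by (simp add: pderiv_mult pderiv_add pderiv_diff pderiv_smult pderiv_pCons algebra_simps
        smult_add_left numeral_mult_conv_smult)
  finally show ?case .
qed

lemma degree_higher_pderiv:
  fixes p :: "'a::{comm_semiring_1,semiring_no_zero_divisors,semiring_char_0} poly"
  shows "degree ((pderiv^^k) p) = degree p - k"
  by (induction k) (auto simp: degree_pderiv)

lemma higher_pderiv_eq_0:
  fixes p :: "'a::{field,semiring_char_0} poly"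
  assumes "degree p < k"
  shows "(pderiv^^k) p = 0"
proof -
  obtain j where k: "k = Suc j" and "degree p \<le> j" using assms by (cases k) auto
  then have "degree ((pderiv^^j) p) = 0" by (simp add: degree_higher_pderiv)
  then show ?thesis unfolding k by (simp add: pderiv_eq_0_iff)
qed

section \<open>Derivatives at a point far from all roots\<close>

lemma pow_plus_succ_le: "(N::nat)^(Suc j) + Suc j * N^j \<le> (N + 1)^(Suc j)"
proof (induction j)
  case 0
  then show ?case by simp
next
  case (Suc j)
  have "N^(Suc (Suc j)) + Suc (Suc j) * N^(Suc j) \<le> (N + 1) * (N^(Suc j) + Suc j * N^j)"
    by (simp add: algebra_simps)
  also have "\<dots> \<le> (N + 1) * (N + 1)^(Suc j)"
    using Suc by (rule mult_le_mono2)
  finally show ?case by simp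
qed

lemma higher_pderiv_bound_mset:
  fixes M :: "complex multiset" and d :: real
  assumes "d \<ge> 0" "\<forall>x\<in>#M. d \<le> cmod (w - x)"
  shows "cmod (poly ((pderiv^^k) (\<Prod>x\<in>#M. [:-x,1:])) w) * d^k
          \<le> real (size M)^k * cmod (poly (\<Prod>x\<in>#M. [:-x,1:]) w)"
  using assms(2)
proof (induction M arbitrary: k)
  case empty
  show ?case
  proof (cases k)
    case (Suc j)
    have "(pderiv^^k) (1::complex poly) = 0" by (rule higher_pderiv_eq_0) (simp add: Suc)
    then show ?thesis by simp
  qed simp
next
  case (add a M)
  define Q where "Q = (\<Prod>x\<in>#M. [:-x,1:])"
  define N where "N = real (size M)"
  have IH: "\<And>k. cmod (poly ((pderiv^^k) Q) w) * d^k \<le> N^k * cmod (poly Q w)"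
    using add unfolding Q_def N_def by auto
  have da: "d \<le> cmod (w - a)" using add by auto
  show ?case
  proof (cases k)
    case 0
    then show ?thesis by simp
  next
    case (Suc j)
    have "poly ((pderiv^^k) ([:-a,1:] * Q)) w =
            (w - a) * poly ((pderiv^^(Suc j)) Q) w + of_nat (Suc j) * poly ((pderiv^^j) Q) w"
      unfolding Suc higher_pderiv_linear_factor by (simp add: algebra_simps)
    then have "cmod (poly ((pderiv^^k) ([:-a,1:] * Q)) w) * d^k \<le>
       (cmod (w - a) * cmod (poly ((pderiv^^(Suc j)) Q) w)
          + real (Suc j) * cmod (poly ((pderiv^^j) Q) w)) * d^k"
      by (metis (no_types, lifting) assms(1) mult_right_mono norm_mult norm_of_nat
          norm_triangle_ineq zero_le_power)
    also have "\<dots> = cmod (w - a) * (cmod (poly ((pderiv^^(Suc j)) Q) w) * d^(Suc j))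
                    + real (Suc j) * (cmod (poly ((pderiv^^j) Q) w) * d^j) * d"
      by (simp add: Suc algebra_simps)
    also have "\<dots> \<le> cmod (w - a) * (N^(Suc j) * cmod (poly Q w))
                    + real (Suc j) * (N^j * cmod (poly Q w)) * cmod (w - a)"
    proof (rule add_mono)
      show "cmod (w - a) * (cmod (poly ((pderiv^^(Suc j)) Q) w) * d^(Suc j))
              \<le> cmod (w - a) * (N^(Suc j) * cmod (poly Q w))"
        using IH[of "Suc j"] by (rule mult_left_mono) simp
      have "real (Suc j) * (cmod (poly ((pderiv^^j) Q) w) * d^j) \<le> real (Suc j) * (N^j * cmod (poly Q w))"
        using IH[of j] by (rule mult_left_mono) simp
      then show "real (Suc j) * (cmod (poly ((pderiv^^j) Q) w) * d^j) * d
              \<le> real (Suc j) * (N^j * cmod (poly Q w)) * cmod (w - a)"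
        using assms(1) by (intro mult_mono[OF _ da]) (auto simp: N_def)
    qed
    also have "\<dots> = (N^(Suc j) + real (Suc j) * N^j) * (cmod (w - a) * cmod (poly Q w))"
      by (simp add: algebra_simps)
    also have "\<dots> \<le> (N + 1)^(Suc j) * (cmod (w - a) * cmod (poly Q w))"
    proof (rule mult_right_mono)
      show "N^(Suc j) + real (Suc j) * N^j \<le> (N + 1)^(Suc j)"
        using pow_plus_succ_le[of "size M" j] unfolding N_def
        by (metis of_nat_1 of_nat_add of_nat_le_iff of_nat_mult of_nat_power)
    qed simp
    also have "\<dots> = (N + 1)^k * cmod (poly ([:-a,1:] * Q) w)"
      by (simp only: Suc poly_mult norm_mult) simp
    finally have "cmod (poly ((pderiv^^k) ([:-a,1:] * Q)) w) * d^k
                    \<le> (N + 1)^k * cmod (poly ([:-a,1:] * Q) w)" .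
    moreover have "(\<Prod>x\<in>#add_mset a M. [:-x,1:]) = [:-a,1:] * Q"
      by (simp add: Q_def)
    moreover have "real (size (add_mset a M)) = N + 1"
      by (simp add: N_def)
    ultimately show ?thesis by (simp only:)
  qed
qed

lemma higher_pderiv_bound:
  fixes p :: "complex poly" and d :: real
  assumes "p \<noteq> 0" "degree p \<le> N" "d \<ge> 0" "\<And>x. poly p x = 0 \<Longrightarrow> d \<le> cmod (w - x)"
  shows "cmod (poly ((pderiv^^k) p) w) * d^k \<le> real N^k * cmod (poly p w)"
proof -
  let ?M = "proots p"
  let ?q = "\<Prod>x\<in>#?M. [:-x,1:]"
  have p: "p = smult (lead_coeff p) ?q"
    by (rule complex_poly_decompose_multiset[symmetric])
  have "cmod (poly ((pderiv^^k) p) w) * d^k = cmod (lead_coeff p) * (cmod (poly ((pderiv^^k) ?q) w) * d^k)"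
    by (subst p) (simp add: higher_pderiv_smult norm_mult)
  also have "\<dots> \<le> cmod (lead_coeff p) * (real (size ?M)^k * cmod (poly ?q w))"
    using assms by (intro mult_left_mono higher_pderiv_bound_mset) auto
  also have "\<dots> = real (degree p)^k * cmod (poly p w)"
    by (subst (2) p) (simp add: size_proots_complex norm_mult)
  also have "\<dots> \<le> real N^k * cmod (poly p w)"
    using assms(2) by (intro mult_right_mono power_mono) auto
  finally show ?thesis .
qed

section \<open>The operator \<open>T\<close> and the quantities \<open>R_T\<close> and \<open>\<tau>\<close>\<close>

lemma poly_Top: "poly (Top n \<alpha> f) w = poly f w + (\<Sum>k=1..n. \<alpha> k * poly ((pderiv^^k) f) w)"
  unfolding Top_def by (simp add: poly_sum)

lemma Top_truncate:
  assumes "degree f \<le> m" "m \<le> n"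
  shows "Top n \<alpha> f = f + (\<Sum>k=1..m. smult (\<alpha> k) ((pderiv^^k) f))"
  unfolding Top_def
  using assms by (intro arg_cong[where f="(+) f"] sum.mono_neutral_right) (auto simp: higher_pderiv_eq_0)

lemma coeff_Top_degree:
  assumes "degree f \<ge> 1"
  shows "coeff (Top n \<alpha> f) (degree f) = lead_coeff f"
proof -
  have "\<And>k. k \<in> {1..n} \<Longrightarrow> coeff ((pderiv^^k) f) (degree f) = 0"
    using assms by (intro coeff_eq_0) (auto simp: degree_higher_pderiv)
  then show ?thesis unfolding Top_def by (simp add: coeff_sum)
qed

lemma zeros_finite_nonempty:
  assumes "degree p \<ge> 1"
  shows "finite (zeros p)" "zeros p \<noteq> {}"
proof -
  show "finite (zeros p)"
    using assms poly_roots_finite[of p] unfolding zeros_def by fastforce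
  show "zeros p \<noteq> {}"
    using assms fundamental_theorem_of_algebra constant_degree unfolding zeros_def by force
qed

lemma zeros_Top_finite_nonempty:
  assumes "degree f \<ge> 1"
  shows "finite (zeros (Top n \<alpha> f))" "zeros (Top n \<alpha> f) \<noteq> {}"
proof -
  have "coeff (Top n \<alpha> f) (degree f) \<noteq> 0"
    using coeff_Top_degree[OF assms] assms by auto
  then have "degree (Top n \<alpha> f) \<ge> 1"
    using le_degree assms by (meson order_trans)
  then show "finite (zeros (Top n \<alpha> f))" "zeros (Top n \<alpha> f) \<noteq> {}"
    by (rule zeros_finite_nonempty)+
qed

lemma R_T_attained:
  assumes "degree f \<ge> 1"
  obtains w x0 where "poly (Top n \<alpha> f) w = 0" "poly f x0 = 0" "R_T n \<alpha> f = cmod (w - x0)"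
    "\<And>x. poly f x = 0 \<Longrightarrow> cmod (w - x0) \<le> cmod (w - x)"
proof -
  let ?dist = "\<lambda>w. Min ((\<lambda>x. cmod (w - x)) ` zeros f)"
  have "R_T n \<alpha> f \<in> ?dist ` zeros (Top n \<alpha> f)"
    unfolding R_T_def using zeros_Top_finite_nonempty[OF assms] by (intro Max_in) auto
  then obtain w where w: "w \<in> zeros (Top n \<alpha> f)" and R: "R_T n \<alpha> f = ?dist w" by blast
  have fin: "finite (zeros f)" "zeros f \<noteq> {}" using zeros_finite_nonempty[OF assms] .
  then have "?dist w \<in> (\<lambda>x. cmod (w - x)) ` zeros f" by (intro Min_in) auto
  then obtain x0 where x0: "x0 \<in> zeros f" and d: "?dist w = cmod (w - x0)" by blast
  have "cmod (w - x0) \<le> cmod (w - x)" if "poly f x = 0" for x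
    using that fin d by (metis (mono_tags, lifting) Min_le finite_imageI image_eqI mem_Collect_eq zeros_def)
  with that w x0 R d show ?thesis unfolding zeros_def by auto
qed

lemma R_T_lower_bound:
  assumes "degree f \<ge> 1" "poly (Top n \<alpha> f) w = 0" "\<And>x. poly f x = 0 \<Longrightarrow> r \<le> cmod (w - x)"
  shows "r \<le> R_T n \<alpha> f"
proof -
  have fin: "finite (zeros f)" "zeros f \<noteq> {}" using zeros_finite_nonempty[OF assms(1)] .
  have "r \<le> Min ((\<lambda>x. cmod (w - x)) ` zeros f)"
    using fin assms(3) by (subst Min_ge_iff) (auto simp: zeros_def)
  also have "\<dots> \<le> R_T n \<alpha> f"
    unfolding R_T_def using assms(2) zeros_Top_finite_nonempty[OF assms(1)]
    by (intro Max_ge) (auto simp: zeros_def)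
  finally show ?thesis .
qed

lemma tau_pos_and_le:
  assumes "degree f \<ge> 2" "rsquarefree f"
  shows "tau f > 0" "\<And>x v. poly f x = 0 \<Longrightarrow> poly (pderiv f) v = 0 \<Longrightarrow> tau f \<le> cmod (x - v)"
proof -
  let ?S = "{cmod (w - v) | w v. w \<in> zeros f \<and> v \<in> zeros (pderiv f) \<and> v \<noteq> w}"
  have "degree (pderiv f) \<ge> 1" using assms by (simp add: degree_pderiv)
  then have fz': "finite (zeros (pderiv f))" "zeros (pderiv f) \<noteq> {}"
    by (rule zeros_finite_nonempty)+
  have fz: "finite (zeros f)" "zeros f \<noteq> {}" using assms zeros_finite_nonempty[of f] by auto
  have distinct: "\<And>x v. poly f x = 0 \<Longrightarrow> poly (pderiv f) v = 0 \<Longrightarrow> v \<noteq> x"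
    using assms(2) rsquarefree_roots by metis
  have "?S \<subseteq> (\<lambda>(w, v). cmod (w - v)) ` (zeros f \<times> zeros (pderiv f))" by auto
  then have fin: "finite ?S" by (rule finite_subset) (use fz fz' in auto)
  have "?S \<noteq> {}" using fz fz' distinct unfolding zeros_def by blast
  then have "Min ?S \<in> ?S" using fin by (rule Min_in[rotated])
  then show "tau f > 0" unfolding tau_def by auto
  fix x v assume "poly f x = 0" "poly (pderiv f) v = 0"
  then have "cmod (x - v) \<in> ?S" using distinct unfolding zeros_def by blast
  then show "tau f \<le> cmod (x - v)" unfolding tau_def using fin by simp
qed

text \<open>For a quadratic with distinct roots \<open>a, b\<close> the only critical point is the midpoint,
  so \<open>\<tau> = |a - b| / 2\<close>.\<close>
lemma tau_quadratic:
  assumes "a \<noteq> b"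
  shows "tau ([:-a,1:] * [:-b,1:]) = cmod (a - b) / 2"
proof -
  let ?f = "[:-a,1:] * [:-b,1:]"
  define m where "m = (a + b) / 2"
  have zf: "zeros ?f = {a, b}" unfolding zeros_def poly_mult by auto
  have "pderiv ?f = [:-(a + b), 2:]"
    by (simp add: pderiv_mult pderiv_pCons algebra_simps)
  then have zf': "zeros (pderiv ?f) = {m}" unfolding zeros_def m_def by (auto simp: field_simps)
  have "m \<noteq> a" "m \<noteq> b" using assms by (auto simp: m_def field_simps)
  then have "{cmod (w - v) | w v. w \<in> zeros ?f \<and> v \<in> zeros (pderiv ?f) \<and> v \<noteq> w}
               = {cmod (a - m), cmod (b - m)}"
    unfolding zf zf' by blast
  moreover have "cmod (a - m) = cmod (a - b) / 2" "cmod (b - m) = cmod (a - b) / 2"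
    by (simp_all add: m_def field_simps norm_divide norm_minus_commute)
  ultimately show ?thesis unfolding tau_def by simp
qed

lemma rsquarefree_quadratic:
  fixes a b :: "'a::field_char_0"
  assumes "a \<noteq> b"
  shows "rsquarefree ([:-a,1:] * [:-b,1:])"
proof -
  define f where "f = [:-a,1:] * [:-b,1:]"
  have "pderiv f = [:-(a + b), 2:]"
    unfolding f_def by (simp add: pderiv_mult pderiv_pCons algebra_simps)
  then have f': "poly (pderiv f) x = 2 * x - (a + b)" for x by simp
  have "poly f x = 0 \<longleftrightarrow> x = a \<or> x = b" for x unfolding f_def poly_mult by auto
  then have "\<not> (poly f x = 0 \<and> poly (pderiv f) x = 0)" for x
    using assms unfolding f' by auto
  then show ?thesis unfolding rsquarefree_roots f_def by blast
qed

section \<open>Boundedness of \<open>\<tau> R_T\<close> when \<open>\<alpha>\<^sub>1 = 0\<close>\<close>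

definition root_dist_const :: "nat \<Rightarrow> (nat \<Rightarrow> complex) \<Rightarrow> real" where
  "root_dist_const n \<alpha> = max 1 (\<Sum>k=1..n. cmod (\<alpha> k) * real n ^ k)"

definition crit_dist_const :: "nat \<Rightarrow> (nat \<Rightarrow> complex) \<Rightarrow> real" where
  "crit_dist_const n \<alpha> = (\<Sum>k=1..n. cmod (\<alpha> k) * (2 * real n) ^ (k - 1))"

lemma crit_dist_const_nonneg: "crit_dist_const n \<alpha> \<ge> 0"
  unfolding crit_dist_const_def by (intro sum_nonneg) auto

lemma Top_root_value_bound:
  assumes "poly (Top n \<alpha> f) w = 0"
  shows "cmod (poly f w) \<le> (\<Sum>k=1..n. cmod (\<alpha> k) * cmod (poly ((pderiv^^k) f) w))"
proof -
  have "poly f w = - (\<Sum>k=1..n. \<alpha> k * poly ((pderiv^^k) f) w)"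
    using assms unfolding poly_Top by (simp add: add_eq_0_iff)
  then have "cmod (poly f w) = cmod (\<Sum>k=1..n. \<alpha> k * poly ((pderiv^^k) f) w)"
    by simp
  also have "\<dots> \<le> (\<Sum>k=1..n. cmod (\<alpha> k * poly ((pderiv^^k) f) w))"
    by (rule norm_sum)
  finally show ?thesis by (simp add: norm_mult)
qed

text \<open>A root \<open>w\<close> of \<open>T f\<close> lies within a bounded distance of the roots of \<open>f\<close>: if all roots of
  \<open>f\<close> are at distance \<open>d > 1\<close> from \<open>w\<close>, then \<open>d |f(w)| \<le> \<Sum> |\<alpha>\<^sub>k| |f\<^sup>(\<^sup>k\<^sup>)(w)| d^k \<le> A |f(w)|\<close>.\<close>
lemma Top_root_near_roots:
  assumes "f \<noteq> 0" "degree f \<le> n" "poly (Top n \<alpha> f) w = 0" "d \<ge> 0"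
    and far: "\<And>x. poly f x = 0 \<Longrightarrow> d \<le> cmod (w - x)"
  shows "d \<le> root_dist_const n \<alpha>"
proof (cases "d \<le> 1")
  case True
  then show ?thesis unfolding root_dist_const_def by auto
next
  case False
  then have fw: "poly f w \<noteq> 0" using far[of w] by auto
  have "d * cmod (poly f w) \<le> d * (\<Sum>k=1..n. cmod (\<alpha> k) * cmod (poly ((pderiv^^k) f) w))"
    using Top_root_value_bound[OF assms(3)] assms(4) by (rule mult_left_mono)
  also have "\<dots> = (\<Sum>k=1..n. cmod (\<alpha> k) * (cmod (poly ((pderiv^^k) f) w) * d))"
    by (simp add: sum_distrib_left mult_ac)
  also have "\<dots> \<le> (\<Sum>k=1..n. cmod (\<alpha> k) * (real n ^ k * cmod (poly f w)))"
  proof (intro sum_mono mult_left_mono)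
    fix k assume k: "k \<in> {1..n}"
    have "d \<le> d^k" using False k by (intro power_increasing[where n=1, simplified]) auto
    then have "cmod (poly ((pderiv^^k) f) w) * d \<le> cmod (poly ((pderiv^^k) f) w) * d^k"
      by (intro mult_left_mono) auto
    also have "\<dots> \<le> real n ^ k * cmod (poly f w)"
      using assms by (intro higher_pderiv_bound) auto
    finally show "cmod (poly ((pderiv^^k) f) w) * d \<le> real n ^ k * cmod (poly f w)" .
  qed auto
  also have "\<dots> = (\<Sum>k=1..n. cmod (\<alpha> k) * real n ^ k) * cmod (poly f w)"
    by (simp add: sum_distrib_right mult.assoc)
  finally show ?thesis
    using fw unfolding root_dist_const_def by auto
qed

text \<open>If \<open>\<alpha>\<^sub>1 = 0\<close> and all critical points of \<open>f\<close> are at distance at least \<open>t/2 \<ge> 1/2\<close>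
  from a root \<open>w\<close> of \<open>T f\<close>, then \<open>t |f(w)| \<le> B |f'(w)|\<close>: the derivative estimate applied
  to \<open>f'\<close> bounds every term \<open>\<alpha>\<^sub>k f\<^sup>(\<^sup>k\<^sup>)(w)\<close>, \<open>k \<ge> 2\<close>, of \<open>f(w) = -\<Sum> \<alpha>\<^sub>k f\<^sup>(\<^sup>k\<^sup>)(w)\<close>.\<close>
lemma Top_root_far_from_critical:
  assumes a1: "\<alpha> 1 = 0" and "degree f \<le> n" "pderiv f \<noteq> 0" "poly (Top n \<alpha> f) w = 0" "t \<ge> 1"
    and far: "\<And>v. poly (pderiv f) v = 0 \<Longrightarrow> t / 2 \<le> cmod (w - v)"
  shows "t * cmod (poly f w) \<le> crit_dist_const n \<alpha> * cmod (poly (pderiv f) w)"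
proof -
  have "t * cmod (poly f w) \<le> t * (\<Sum>k=1..n. cmod (\<alpha> k) * cmod (poly ((pderiv^^k) f) w))"
    using Top_root_value_bound[OF assms(4)] assms(5) by (intro mult_left_mono) auto
  also have "\<dots> = (\<Sum>k=1..n. cmod (\<alpha> k) * (t * cmod (poly ((pderiv^^k) f) w)))"
    by (simp add: sum_distrib_left mult_ac)
  also have "\<dots> \<le> (\<Sum>k=1..n. cmod (\<alpha> k) * ((2 * real n)^(k - 1) * cmod (poly (pderiv f) w)))"
  proof (rule sum_mono)
    fix k assume k: "k \<in> {1..n}"
    show "cmod (\<alpha> k) * (t * cmod (poly ((pderiv^^k) f) w))
            \<le> cmod (\<alpha> k) * ((2 * real n)^(k - 1) * cmod (poly (pderiv f) w))"
    proof (cases "k = 1")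
      case True
      then show ?thesis using a1 by simp
    next
      case False
      then obtain j where j: "k = Suc j" "j \<ge> 1" using k by (cases k) auto
      have "(pderiv^^k) f = (pderiv^^j) (pderiv f)"
        using j by (simp add: funpow_Suc_right del: funpow.simps)
      moreover have "degree (pderiv f) \<le> n" using assms(2) by (simp add: degree_pderiv)
      ultimately have bound: "cmod (poly ((pderiv^^k) f) w) * (t / 2)^j \<le> real n ^ j * cmod (poly (pderiv f) w)"
        using assms(3,5) far higher_pderiv_bound[of "pderiv f" n "t / 2" w j] by simp
      have "t \<le> t^j" using assms(5) j by (intro power_increasing[where n=1, simplified]) auto
      then have "t * cmod (poly ((pderiv^^k) f) w) \<le> 2^j * (cmod (poly ((pderiv^^k) f) w) * (t / 2)^j)"
        by (simp add: power_divide mult.commute mult_right_mono)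
      also have "\<dots> \<le> 2^j * (real n ^ j * cmod (poly (pderiv f) w))"
        using bound by (intro mult_left_mono) auto
      also have "\<dots> = (2 * real n)^(k - 1) * cmod (poly (pderiv f) w)"
        using j by (simp add: power_mult_distrib)
      finally show ?thesis by (intro mult_left_mono) auto
    qed
  qed
  also have "\<dots> = crit_dist_const n \<alpha> * cmod (poly (pderiv f) w)"
    unfolding crit_dist_const_def by (simp add: sum_distrib_right mult.assoc)
  finally show ?thesis .
qed

text \<open>Combining this with the first-derivative estimate \<open>d |f'(w)| \<le> n |f(w)|\<close> (all roots of \<open>f\<close>
  at distance \<open>\<ge> d\<close>) gives \<open>t d |f'(w)| \<le> n B |f'(w)|\<close>, and \<open>f'(w) \<noteq> 0\<close> as \<open>w\<close> is far from
  every critical point.\<close>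
lemma tau_dist_far_from_critical:
  assumes a1: "\<alpha> 1 = 0" and f0: "f \<noteq> 0" and "degree f \<le> n" "poly (Top n \<alpha> f) w = 0" "t \<ge> 1"
    and far: "\<And>v. poly (pderiv f) v = 0 \<Longrightarrow> t / 2 \<le> cmod (w - v)"
    and "d \<ge> 0" and roots_far: "\<And>x. poly f x = 0 \<Longrightarrow> d \<le> cmod (w - x)"
  shows "t * d \<le> real n * crit_dist_const n \<alpha>"
proof -
  define B where "B = crit_dist_const n \<alpha>"
  have f'w: "poly (pderiv f) w \<noteq> 0" using far[of w] assms(5) by auto
  then have tf: "t * cmod (poly f w) \<le> B * cmod (poly (pderiv f) w)"
    unfolding B_def using assms by (intro Top_root_far_from_critical) auto
  have "cmod (poly ((pderiv^^1) f) w) * d^1 \<le> real n^1 * cmod (poly f w)"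
    using assms by (intro higher_pderiv_bound) auto
  then have df: "d * cmod (poly (pderiv f) w) \<le> real n * cmod (poly f w)"
    by (simp add: mult.commute)
  have "(t * d) * cmod (poly (pderiv f) w) = t * (d * cmod (poly (pderiv f) w))"
    by simp
  also have "\<dots> \<le> t * (real n * cmod (poly f w))"
    using df assms(5) by (intro mult_left_mono) auto
  also have "\<dots> = real n * (t * cmod (poly f w))"
    by simp
  also have "\<dots> \<le> real n * (B * cmod (poly (pderiv f) w))"
    using tf by (intro mult_left_mono) auto
  finally have "(t * d) * cmod (poly (pderiv f) w) \<le> (real n * B) * cmod (poly (pderiv f) w)"
    by simp
  then show ?thesis using f'w unfolding B_def by simp
qed

lemma tau_R_T_bounded:
  assumes a1: "\<alpha> 1 = 0" and deg: "2 \<le> degree f" "degree f \<le> n" and sq: "rsquarefree f"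
  shows "tau f * R_T n \<alpha> f \<le> 2 * root_dist_const n \<alpha> ^ 2 + real n * crit_dist_const n \<alpha>"
proof -
  define D where "D = root_dist_const n \<alpha>"
  define B where "B = crit_dist_const n \<alpha>"
  define t where "t = tau f"
  obtain w x0 where Tw: "poly (Top n \<alpha> f) w = 0" and x0: "poly f x0 = 0"
    and R: "R_T n \<alpha> f = cmod (w - x0)" and nearest: "\<And>x. poly f x = 0 \<Longrightarrow> cmod (w - x0) \<le> cmod (w - x)"
    using R_T_attained[of f n \<alpha>] deg by auto
  define d where "d = cmod (w - x0)"
  have f0: "f \<noteq> 0" using deg by auto
  have t0: "t > 0" and t_le: "\<And>x v. poly f x = 0 \<Longrightarrow> poly (pderiv f) v = 0 \<Longrightarrow> t \<le> cmod (x - v)"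
    using tau_pos_and_le[OF deg(1) sq] unfolding t_def by auto
  have d0: "d \<ge> 0" unfolding d_def by simp
  have D1: "D \<ge> 1" unfolding D_def root_dist_const_def by simp
  have nB: "real n * B \<ge> 0" unfolding B_def using crit_dist_const_nonneg by simp
  have "1 * D \<le> D * D" using D1 by (intro mult_right_mono) auto
  then have D_le: "D \<le> 2 * D^2" using D1 by (simp add: power2_eq_square)
  have dD: "d \<le> D"
    unfolding D_def d_def using f0 deg(2) Tw nearest by (intro Top_root_near_roots) auto
  have "t * d \<le> 2 * D^2 + real n * B"
  proof (cases "\<exists>v. poly (pderiv f) v = 0 \<and> cmod (w - v) < t / 2")
    case True
    then obtain v where v: "poly (pderiv f) v = 0" "cmod (w - v) < t / 2" by blast
    have "t \<le> cmod (x0 - v)" using t_le[OF x0 v(1)] .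
    also have "\<dots> \<le> d + cmod (w - v)"
      using norm_triangle_ineq[of "x0 - w" "w - v"] by (simp add: d_def norm_minus_commute)
    finally have "t \<le> 2 * d" using v(2) by linarith
    then have "t * d \<le> 2 * d * d" using d0 by (intro mult_right_mono)
    also have "\<dots> \<le> 2 * D * D" using dD d0 by (intro mult_mono) auto
    finally show ?thesis using nB by (simp add: power2_eq_square)
  next
    case far: False
    show ?thesis
    proof (cases "t < 1")
      case True
      then have "t * d \<le> D" using dD d0 t0 by (meson less_imp_le mult_left_le_one_le order_trans)
      then show ?thesis using D_le nB by linarith
    next
      case False
      have "t * d \<le> real n * B"
        unfolding B_def d_def using a1 f0 deg(2) Tw False far nearest
        by (intro tau_dist_far_from_critical) (auto simp: not_less)
      then show ?thesis using D_le D1 by linarith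
    qed
  qed
  then show ?thesis unfolding t_def D_def B_def d_def R .
qed

section \<open>Unboundedness of \<open>\<tau> R_T\<close> when \<open>\<alpha>\<^sub>1 \<noteq> 0\<close>\<close>

lemma Top_quadratic_root_0:
  fixes M :: real and \<alpha> :: "nat \<Rightarrow> complex"
  assumes "n \<ge> 2" "M \<noteq> 0"
  defines "K \<equiv> \<alpha> 1 ^ 2 - 2 * \<alpha> 2"
  shows "poly (Top n \<alpha> ([:-(\<alpha> 1 + K / M),1:] * [:-(\<alpha> 1 + M),1:])) 0 = 0"
proof -
  define \<delta> where "\<delta> = \<alpha> 1 + K / M"
  define L where "L = \<alpha> 1 + M"
  define f where "f = [:-\<delta>,1:] * [:-L,1:]"
  have f: "poly f 0 = \<delta> * L" unfolding f_def by simp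
  have "pderiv f = [:-(\<delta> + L), 2:]"
    unfolding f_def by (simp add: pderiv_mult pderiv_pCons algebra_simps)
  then have f': "poly (pderiv f) 0 = -(\<delta> + L)" and f'': "poly ((pderiv^^2) f) 0 = 2"
    by (simp_all add: numeral_2_eq_2 pderiv_pCons)
  have "Top n \<alpha> f = f + (\<Sum>k=1..2. smult (\<alpha> k) ((pderiv^^k) f))"
    using assms(1) by (intro Top_truncate) (auto simp: f_def)
  then have "poly (Top n \<alpha> f) 0 = poly f 0 + \<alpha> 1 * poly ((pderiv^^1) f) 0 + \<alpha> 2 * poly ((pderiv^^2) f) 0"
    by (simp add: poly_sum numeral_2_eq_2)
  also have "\<dots> = \<delta> * L - \<alpha> 1 * (\<delta> + L) + 2 * \<alpha> 2"
    by (simp add: f f' f'') (simp add: algebra_simps)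
  also have "\<dots> = 0"
    using assms(2) by (simp add: \<delta>_def L_def K_def field_simps power2_eq_square)
  finally show ?thesis by (simp add: f_def \<delta>_def L_def)
qed

text \<open>For \<open>\<alpha>\<^sub>1 \<noteq> 0\<close> these quadratics make \<open>\<tau> R_T\<close> arbitrarily large: for large \<open>M\<close> both roots
  are at distance at least \<open>|\<alpha>\<^sub>1|/2\<close> from \<open>0\<close>, while \<open>\<tau> = |M - K/M| / 2 \<ge> 3M/8\<close>.\<close>
lemma tau_R_T_unbounded:
  assumes a1: "\<alpha> 1 \<noteq> 0" and n2: "n \<ge> 2"
  shows "\<exists>f. degree f \<le> n \<and> 2 \<le> degree f \<and> rsquarefree f \<and> \<Gamma> \<le> tau f * R_T n \<alpha> f"
proof -
  define a where "a = cmod (\<alpha> 1)"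
  define K where "K = \<alpha> 1 ^ 2 - 2 * \<alpha> 2"
  define M where "M = 2 * a + (2 * cmod K + 8 * \<bar>\<Gamma>\<bar>) / a"
  define \<delta> where "\<delta> = \<alpha> 1 + K / M"
  define L where "L = \<alpha> 1 + M"
  define f where "f = [:-\<delta>,1:] * [:-L,1:]"
  have a0: "a > 0" using a1 unfolding a_def by simp
  have M_ge: "M \<ge> 2 * a" unfolding M_def using a0 by simp
  have Ma: "M * a = 2 * a^2 + 2 * cmod K + 8 * \<bar>\<Gamma>\<bar>"
    unfolding M_def using a0 by (simp add: field_simps power2_eq_square)
  have M0: "M > 0" using M_ge a0 by linarith
  have small: "cmod (K / M) \<le> a / 2"
  proof -
    have "2 * cmod K \<le> M * a" using Ma by (simp add: power2_eq_square)
    then show ?thesis using M0 a0 by (simp add: norm_divide field_simps)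
  qed
  have \<delta>_far: "a / 2 \<le> cmod \<delta>"
    using norm_triangle_ineq2[of "\<alpha> 1" "- (K / M)"] small unfolding \<delta>_def a_def by simp
  have "M - a \<le> cmod L"
    using norm_triangle_ineq2[of "of_real M" "- \<alpha> 1"] M0 unfolding L_def a_def by (simp add: add.commute)
  then have L_far: "a / 2 \<le> cmod L" using M_ge a0 by linarith
  have "L - \<delta> = of_real M - K / M" unfolding L_def \<delta>_def by simp
  then have dist_L\<delta>: "3 * M / 4 \<le> cmod (L - \<delta>)"
    using norm_triangle_ineq2[of "of_real M" "K / M"] small M_ge M0 by simp
  then have "\<delta> \<noteq> L" using M0 by auto
  then have tau: "tau f = cmod (\<delta> - L) / 2" and sq: "rsquarefree f" and deg: "degree f = 2"
    unfolding f_def using tau_quadratic rsquarefree_quadratic by auto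
  have "poly (Top n \<alpha> f) 0 = 0"
    unfolding f_def \<delta>_def L_def K_def using Top_quadratic_root_0 n2 M0 by auto
  moreover have roots: "poly f x = 0 \<Longrightarrow> x = \<delta> \<or> x = L" for x
    unfolding f_def poly_mult by auto
  ultimately have R: "a / 2 \<le> R_T n \<alpha> f"
    using deg \<delta>_far L_far by (intro R_T_lower_bound) (auto dest: roots)
  have "8 * \<bar>\<Gamma>\<bar> \<le> M * a"
    using Ma zero_le_power2[of a] norm_ge_zero[of K] by linarith
  moreover have "(3 * M / 8) * (a / 2) = 3 * (M * a) / 16" by simp
  ultimately have "\<Gamma> \<le> (3 * M / 8) * (a / 2)" by linarith
  also have "\<dots> \<le> tau f * R_T n \<alpha> f"
    using dist_L\<delta> R a0 M0 by (intro mult_mono) (auto simp: tau norm_minus_commute)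
  finally show ?thesis using deg sq n2 by (intro exI[of _ f]) auto
qed

theorem theorem3p1:
  fixes n :: nat and \<alpha> :: "nat \<Rightarrow> complex"
  assumes "n \<ge> 2"
  shows "\<alpha> 1 = 0 \<longleftrightarrow>
    (\<exists>\<Gamma>>0. \<forall>f :: complex poly. degree f \<le> n \<and> degree f \<ge> 2 \<and> rsquarefree f \<longrightarrow>
        tau f * R_T n \<alpha> f < \<Gamma>)"
proof
  assume "\<alpha> 1 = 0"
  define G where "G = 2 * root_dist_const n \<alpha> ^ 2 + real n * crit_dist_const n \<alpha>"
  have "G \<ge> 0" unfolding G_def using crit_dist_const_nonneg by simp
  moreover have "tau f * R_T n \<alpha> f < G + 1"
    if "degree f \<le> n \<and> degree f \<ge> 2 \<and> rsquarefree f" for f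
    using tau_R_T_bounded[of \<alpha> f n] \<open>\<alpha> 1 = 0\<close> that unfolding G_def by force
  ultimately show "\<exists>\<Gamma>>0. \<forall>f :: complex poly. degree f \<le> n \<and> degree f \<ge> 2 \<and> rsquarefree f \<longrightarrow>
        tau f * R_T n \<alpha> f < \<Gamma>"
    by (intro exI[of _ "G + 1"]) auto
next
  assume "\<exists>\<Gamma>>0. \<forall>f :: complex poly. degree f \<le> n \<and> degree f \<ge> 2 \<and> rsquarefree f \<longrightarrow>
        tau f * R_T n \<alpha> f < \<Gamma>"
  then obtain \<Gamma> where bounded: "\<And>f. degree f \<le> n \<and> degree f \<ge> 2 \<and> rsquarefree f \<Longrightarrow>
        tau f * R_T n \<alpha> f < \<Gamma>" by blast
  show "\<alpha> 1 = 0"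
  proof (rule ccontr)
    assume "\<alpha> 1 \<noteq> 0"
    then obtain f where "degree f \<le> n" "2 \<le> degree f" "rsquarefree f" "\<Gamma> \<le> tau f * R_T n \<alpha> f"
      using tau_R_T_unbounded assms by blast
    with bounded show False by force
  qed
qed

end
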